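(* Let $\gamma:[0,1]\to\mathbb{R}_+$ be a differentiable increasing function with $\gamma(x)>0$ for $x>0$, and assume $\lim_{x\downarrow0}x\gamma'(x)/\gamma(x)=0$. Then $$\lim_{x\downarrow0}\frac{1}{\gamma(x)}\int_0^{1/2}\gamma(xy)\frac{dy}{y\sqrt{\log(1/y)}}=\infty .$$ *)

theory Defs
  imports "HOL-Analysis.Analysis"
begin

end

theory Submission
  imports Defs "HOL-Real_Asymp.Real_Asymp"
begin

(* The hypothesis x \<gamma>'(x) / \<gamma>(x) \<rightarrow> 0 makes \<gamma> slowly varying at 0: the mean value
   theorem for ln \<gamma> gives, for each fixed a \<in> (0,1), eventually \<gamma>(x) \<le> e \<gamma>(a x).
   Since \<gamma> is increasing, the integral is at least
   \<gamma>(a x) \<integral>_a^(1/2) dy / (y sqrt (ln (1/y))) = \<gamma>(a x) (2 sqrt (ln (1/a)) - 2 sqrt (ln 2)),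
   so the normalized integral eventually exceeds (2 sqrt (ln (1/a)) - 2 sqrt (ln 2)) / e,
   which is arbitrarily large for small a. *)

lemma ln_increment_le_of_log_derivative_le:
  fixes \<gamma> :: "real \<Rightarrow> real"
  assumes "0 < u" "u < x" "0 \<le> \<delta>"
    and diff: "\<And>t. t \<in> {u..x} \<Longrightarrow> \<gamma> differentiable (at t)"
    and pos: "\<And>t. t \<in> {u..x} \<Longrightarrow> \<gamma> t > 0"
    and bound: "\<And>t. t \<in> {u..x} \<Longrightarrow> t * deriv \<gamma> t / \<gamma> t \<le> \<delta>"
  shows "ln (\<gamma> x) - ln (\<gamma> u) \<le> (x - u) / u * \<delta>"
proof -
  have "DERIV (\<lambda>t. ln (\<gamma> t)) t :> deriv \<gamma> t / \<gamma> t" if "u \<le> t" "t \<le> x" for t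
    using that diff[of t] pos[of t]
    by (auto intro!: derivative_eq_intros simp: DERIV_deriv_iff_real_differentiable)
  from MVT2[OF \<open>u < x\<close> this] obtain z where z: "u < z" "z < x"
    and mvt: "ln (\<gamma> x) - ln (\<gamma> u) = (x - u) * (deriv \<gamma> z / \<gamma> z)"
    by blast
  have "(x - u) * (deriv \<gamma> z / \<gamma> z) = (x - u) / z * (z * deriv \<gamma> z / \<gamma> z)"
    using z \<open>0 < u\<close> pos[of z] by (simp add: field_simps)
  also have "\<dots> \<le> (x - u) / z * \<delta>"
    using z \<open>0 < u\<close> bound[of z] by (intro mult_left_mono) auto
  also have "\<dots> \<le> (x - u) / u * \<delta>"
    using z \<open>0 < u\<close> \<open>0 \<le> \<delta>\<close> by (intro mult_right_mono divide_left_mono) auto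
  finally show ?thesis
    using mvt by simp
qed

lemma eventually_le_exp_mult_dilation:
  fixes \<gamma> :: "real \<Rightarrow> real"
  assumes diff: "\<gamma> differentiable_on {0<..<1}"
    and pos: "\<And>t. t \<in> {0<..<1} \<Longrightarrow> \<gamma> t > 0"
    and lim: "((\<lambda>x. x * deriv \<gamma> x / \<gamma> x) \<longlongrightarrow> 0) (at_right 0)"
    and "0 < a" "a < 1" "0 < \<epsilon>"
  shows "\<forall>\<^sub>F x in at_right 0. \<gamma> x \<le> exp \<epsilon> * \<gamma> (a * x)"
proof -
  have "\<forall>\<^sub>F t in at_right 0. t * deriv \<gamma> t / \<gamma> t < \<epsilon> * a"
    using order_tendstoD(2)[OF lim] \<open>0 < a\<close> \<open>0 < \<epsilon>\<close> by simp
  then obtain b where "b > 0"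
    and bound: "\<And>t. 0 < t \<Longrightarrow> t < b \<Longrightarrow> t * deriv \<gamma> t / \<gamma> t < \<epsilon> * a"
    unfolding eventually_at_right_field by auto
  have "\<forall>\<^sub>F x in at_right 0. 0 < x \<and> x < min b 1"
    using \<open>b > 0\<close> unfolding eventually_at_right_field by (intro exI[of _ "min b 1"]) auto
  then show ?thesis
  proof eventually_elim
    case (elim x)
    have ax: "0 < a * x" "a * x < x"
      using elim \<open>0 < a\<close> \<open>a < 1\<close> by auto
    have sub: "0 < t" "t < 1" "t < b" if "a * x \<le> t" "t \<le> x" for t
      using that ax elim by auto
    have "ln (\<gamma> x) - ln (\<gamma> (a * x)) \<le> (x - a * x) / (a * x) * (\<epsilon> * a)"
    proof (rule ln_increment_le_of_log_derivative_le)
      fix t assume "t \<in> {a * x..x}"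
      then have t: "0 < t" "t < 1" "t < b"
        using sub by auto
      show "\<gamma> differentiable (at t)"
        using diff t by (simp add: differentiable_on_eq_differentiable_at)
      show "\<gamma> t > 0"
        using pos t by simp
      show "t * deriv \<gamma> t / \<gamma> t \<le> \<epsilon> * a"
        using bound t by (simp add: less_imp_le)
    qed (use ax \<open>0 < a\<close> \<open>0 < \<epsilon>\<close> in auto)
    also have "\<dots> = \<epsilon> * (1 - a)"
      using ax \<open>0 < a\<close> by (simp add: field_simps)
    also have "\<dots> \<le> \<epsilon>"
      using \<open>0 < a\<close> \<open>0 < \<epsilon>\<close> by simp
    finally have "exp (ln (\<gamma> x)) \<le> exp (\<epsilon> + ln (\<gamma> (a * x)))"
      by simp
    moreover have "\<gamma> x > 0" "\<gamma> (a * x) > 0"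
      using pos elim ax by auto
    ultimately show ?case
      by (simp add: exp_add)
  qed
qed

lemma nn_integral_inverse_mult_sqrt_ln:
  assumes "0 < a" "a \<le> b" "b < 1"
  shows "(\<integral>\<^sup>+ y \<in> {a..b}. ennreal (1 / (y * sqrt (ln (1 / y)))) \<partial>lborel)
    = ennreal (2 * sqrt (ln (1 / a)) - 2 * sqrt (ln (1 / b)))"
proof -
  have "(\<integral>\<^sup>+ y \<in> {a..b}. ennreal (1 / (y * sqrt (ln (1 / y)))) \<partial>lborel)
      = ennreal ((\<lambda>y. - 2 * sqrt (ln (1 / y))) b - (\<lambda>y. - 2 * sqrt (ln (1 / y))) a)"
  proof (rule nn_integral_FTC_Icc)
    fix y assume y: "y \<in> {a..b}"
    then have "0 < y" "0 < ln (1 / y)"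
      using assms by auto
    then show "0 \<le> 1 / (y * sqrt (ln (1 / y)))"
      and "DERIV (\<lambda>y. - 2 * sqrt (ln (1 / y))) y :> 1 / (y * sqrt (ln (1 / y)))"
      by (auto intro!: derivative_eq_intros simp: field_simps)
  qed (use assms in auto)
  then show ?thesis
    by simp
qed

lemma nn_integral_dilation_ge:
  fixes \<gamma> :: "real \<Rightarrow> real"
  assumes incr: "mono_on {0..1} \<gamma>"
    and nonneg: "\<And>t. t \<in> {0..1} \<Longrightarrow> \<gamma> t \<ge> 0"
    and "0 < x" "x \<le> 1" "0 < a" "a \<le> 1/2"
  shows "ennreal (\<gamma> (a * x) * (2 * sqrt (ln (1 / a)) - 2 * sqrt (ln 2)))
    \<le> (\<integral>\<^sup>+ y \<in> {0..1/2}. ennreal (\<gamma> (x * y) / (y * sqrt (ln (1 / y)))) \<partial>lborel)"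
proof -
  have "\<gamma> (a * x) \<ge> 0"
    using assms by (intro nonneg) (auto intro: mult_le_one)
  moreover have "2 * sqrt (ln 2) \<le> 2 * sqrt (ln (1 / a))"
    using assms by (simp add: field_simps)
  ultimately have "ennreal (\<gamma> (a * x) * (2 * sqrt (ln (1 / a)) - 2 * sqrt (ln 2)))
      = ennreal (\<gamma> (a * x)) * (\<integral>\<^sup>+ y \<in> {a..1/2}. ennreal (1 / (y * sqrt (ln (1 / y)))) \<partial>lborel)"
    using assms by (simp add: nn_integral_inverse_mult_sqrt_ln ennreal_mult)
  also have "\<dots> = (\<integral>\<^sup>+ y \<in> {a..1/2}. ennreal (\<gamma> (a * x)) * ennreal (1 / (y * sqrt (ln (1 / y)))) \<partial>lborel)"
    by (subst nn_integral_cmult[symmetric]) (auto simp: mult.assoc)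
  also have "\<dots> \<le> (\<integral>\<^sup>+ y \<in> {0..1/2}. ennreal (\<gamma> (x * y) / (y * sqrt (ln (1 / y)))) \<partial>lborel)"
  proof (intro nn_integral_mono)
    fix y
    show "ennreal (\<gamma> (a * x)) * ennreal (1 / (y * sqrt (ln (1 / y)))) * indicator {a..1/2} y
      \<le> ennreal (\<gamma> (x * y) / (y * sqrt (ln (1 / y)))) * indicator {0..1/2} y"
    proof (cases "y \<in> {a..1/2}")
      case True
      then have "0 \<le> y * sqrt (ln (1 / y))"
        using assms by auto
      moreover have "\<gamma> (a * x) \<le> \<gamma> (x * y)"
        using True assms by (intro mono_onD[OF incr]) (auto intro: mult_le_one)
      ultimately have "\<gamma> (a * x) * (1 / (y * sqrt (ln (1 / y)))) \<le> \<gamma> (x * y) / (y * sqrt (ln (1 / y)))"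
        by (simp add: divide_right_mono)
      moreover have "y \<in> {0..1/2}"
        using True assms by auto
      ultimately show ?thesis
        using True \<open>\<gamma> (a * x) \<ge> 0\<close> \<open>0 \<le> y * sqrt (ln (1 / y))\<close>
        by (simp add: ennreal_mult[symmetric] ennreal_leI del: times_divide_eq_right)
    qed simp
  qed
  finally show ?thesis .
qed

lemma normalized_nn_integral_dilation_ge:
  fixes \<gamma> :: "real \<Rightarrow> real"
  assumes incr: "mono_on {0..1} \<gamma>"
    and nonneg: "\<And>t. t \<in> {0..1} \<Longrightarrow> \<gamma> t \<ge> 0"
    and "0 < x" "x \<le> 1" "0 < a" "a \<le> 1/2" "0 < c"
    and "0 < \<gamma> x" "\<gamma> x \<le> c * \<gamma> (a * x)"
  shows "ennreal ((2 * sqrt (ln (1 / a)) - 2 * sqrt (ln 2)) / c)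
    \<le> ennreal (1 / \<gamma> x) *
      (\<integral>\<^sup>+ y \<in> {0..1/2}. ennreal (\<gamma> (x * y) / (y * sqrt (ln (1 / y)))) \<partial>lborel)"
proof -
  let ?J = "2 * sqrt (ln (1 / a)) - 2 * sqrt (ln 2)"
  have "0 \<le> ?J"
    using assms by (simp add: field_simps)
  have "\<gamma> (a * x) \<ge> 0"
    using assms by (intro nonneg) (auto intro: mult_le_one)
  have "?J * \<gamma> x \<le> ?J * (c * \<gamma> (a * x))"
    using \<open>0 \<le> ?J\<close> assms by (intro mult_left_mono) auto
  then have "?J / c \<le> 1 / \<gamma> x * (\<gamma> (a * x) * ?J)"
    using assms by (simp add: field_simps)
  then have "ennreal (?J / c) \<le> ennreal (1 / \<gamma> x) * ennreal (\<gamma> (a * x) * ?J)"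
    using assms \<open>0 \<le> ?J\<close> \<open>\<gamma> (a * x) \<ge> 0\<close> by (simp add: ennreal_mult[symmetric] ennreal_leI)
  also have "\<dots> \<le> ennreal (1 / \<gamma> x) *
      (\<integral>\<^sup>+ y \<in> {0..1/2}. ennreal (\<gamma> (x * y) / (y * sqrt (ln (1 / y)))) \<partial>lborel)"
    using assms by (intro mult_left_mono nn_integral_dilation_ge) auto
  finally show ?thesis .
qed

lemma exists_small_sqrt_ln_inverse_gt:
  "\<exists>a. 0 < a \<and> a < 1/2 \<and> C < 2 * sqrt (ln (1 / a)) - 2 * sqrt (ln 2)"
proof -
  have "LIM a at_right 0. 2 * sqrt (ln (1 / a)) - 2 * sqrt (ln 2) :> at_top"
    by real_asymp
  then have "\<forall>\<^sub>F a in at_right 0. C < 2 * sqrt (ln (1 / a)) - 2 * sqrt (ln 2)"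
    by (simp add: filterlim_at_top_dense)
  moreover have "\<forall>\<^sub>F a in at_right 0. 0 < a \<and> a < (1/2::real)"
    by (rule eventually_at_rightI[of _ "1/2"]) auto
  ultimately have "\<forall>\<^sub>F a in at_right 0. 0 < a \<and> a < 1/2 \<and> C < 2 * sqrt (ln (1 / a)) - 2 * sqrt (ln 2)"
    by eventually_elim auto
  then show ?thesis
    using eventually_happens'[OF trivial_limit_at_right_real] by blast
qed

theorem proposition2p10:
  fixes \<gamma> :: "real \<Rightarrow> real"
  assumes diff: "\<gamma> differentiable_on {0..1}"
    and incr: "mono_on {0..1} \<gamma>"
    and nonneg: "\<And>x. x \<in> {0..1} \<Longrightarrow> \<gamma> x \<ge> 0"
    and pos: "\<And>x. x \<in> {0<..1} \<Longrightarrow> \<gamma> x > 0"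
    and lim: "((\<lambda>x. x * deriv \<gamma> x / \<gamma> x) \<longlongrightarrow> 0) (at_right 0)"
  shows "((\<lambda>x. ennreal (1 / \<gamma> x) *
            (\<integral>\<^sup>+ y \<in> {0..1/2}. ennreal (\<gamma> (x * y) / (y * sqrt (ln (1 / y)))) \<partial>lborel))
          \<longlongrightarrow> \<infinity>) (at_right 0)"
  unfolding infinity_ennreal_def tendsto_top_iff_ennreal
proof (intro allI impI)
  fix r :: real
  assume "0 \<le> r"
  obtain a where a: "0 < a" "a < 1/2" and "exp 1 * r < 2 * sqrt (ln (1 / a)) - 2 * sqrt (ln 2)"
    using exists_small_sqrt_ln_inverse_gt by blast
  then have "r < (2 * sqrt (ln (1 / a)) - 2 * sqrt (ln 2)) / exp 1"
    by (simp add: field_simps)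
  then have r_less: "ennreal r < ennreal ((2 * sqrt (ln (1 / a)) - 2 * sqrt (ln 2)) / exp 1)"
    using \<open>0 \<le> r\<close> by (intro ennreal_lessI; linarith)
  have "\<forall>\<^sub>F x in at_right 0. \<gamma> x \<le> exp 1 * \<gamma> (a * x)"
    using a pos by (intro eventually_le_exp_mult_dilation differentiable_on_subset[OF diff] lim) auto
  moreover have "\<forall>\<^sub>F x in at_right 0. 0 < x \<and> x < (1::real)"
    by (rule eventually_at_rightI[of _ 1]) auto
  ultimately show "\<forall>\<^sub>F x in at_right 0. ennreal r < ennreal (1 / \<gamma> x) *
            (\<integral>\<^sup>+ y \<in> {0..1/2}. ennreal (\<gamma> (x * y) / (y * sqrt (ln (1 / y)))) \<partial>lborel)"
  proof eventually_elim
    case (elim x)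
    show ?case
      by (rule less_le_trans[OF r_less normalized_nn_integral_dilation_ge])
        (use elim a pos incr nonneg in auto)
  qed
qed

end
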